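(* Let $d\ge 2$ and let $n_k$ denote the number of vertices of $L^k(SF(d,4))$, where $SF(d,4)$ is the square-free digraph; equivalently, $n_k$ is the number of words of length $k+4$ over the alphabet $\{0,1,\dots,d\}$ having no two equal consecutive letters and no factor of the form $abab$ (with letters $a\neq b$). Then $n_0=d^4+d^3-d^2-d$, $n_1=d^5+d^4-2d^3-d^2+d$, and $$n_k=(d-1)\,n_{k-1}+(d-1)\,n_{k-2}\qquad\text{for all } k\ge 2.$$
   Context: The square-free digraph $SF(d,4)$ has as vertices the words $a_1a_2a_3a_4$ over $\{0,1,\dots,d\}$ with $a_i\ne a_{i+1}$ for $i=1,2,3$ and not of the form $abab$ (i.e., not $a_1=a_3$ and $a_2=a_4$); there is an arc from $a_1a_2a_3a_4$ to $a_2a_3a_4a_5$ whenever $a_5\ne a_4$ and, if $a_2=a_4$, then $a_5\ne a_3$. The line digraph $LG$ has as vertex set the set of arcs of $G$, with an arc from $e$ to $f$ whenever the head of $e$ equals the tail of $f$; $L^0G=G$, $L^kG=L(L^{k-1}G)$. *)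

theory Defs
  imports Main
begin

text \<open>Words of length k+4 of this kind are exactly
  the vertices of the k-th iterated line digraph of the square-free digraph SF(d,4)
  (a vertex of L^k G is a walk of length k in G, and a walk in SF(d,4) of length k
  is determined by the word of length k+4 it spells).\<close>
definition sf_word :: "nat \<Rightarrow> nat list \<Rightarrow> bool" where
  "sf_word d w \<longleftrightarrow>
     set w \<subseteq> {0..d}
   \<and> (\<forall>i. i + 1 < length w \<longrightarrow> w ! i \<noteq> w ! (i + 1))
   \<and> \<not> (\<exists>i. i + 3 < length w \<and> w ! i = w ! (i + 2) \<and> w ! (i + 1) = w ! (i + 3))"

definition sf_words :: "nat \<Rightarrow> nat \<Rightarrow> nat list set" where
  "sf_words d m = {w. length w = m \<and> sf_word d w}"

definition nSF :: "nat \<Rightarrow> nat \<Rightarrow> nat" where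
  "nSF d k = card (sf_words d (k + 4))"

end

theory Submission imports Defs begin

text \<open>Build the words by prepending letters. Let \<open>s(m)\<close> count the words of length \<open>m\<close> and
  \<open>t(m)\<close> those among them starting with a factor \<open>bab\<close>. A nonempty word extends by every
  letter other than its first one, except that a prefix \<open>bab\<close> also forbids \<open>a\<close>; hence
  \<open>s(m+1) = d s(m) - t(m)\<close> for \<open>m \<ge> 1\<close>. A word of length at least 2 acquires a prefix \<open>aba\<close>
  from its second letter, unless it already starts with \<open>bab\<close>; hence \<open>t(m+1) = s(m) - t(m)\<close>
  for \<open>m \<ge> 2\<close>. Eliminating \<open>t\<close> gives \<open>s(m+2) = (d-1) s(m+1) + (d-1) s(m)\<close>.\<close>

definition sf_extends :: "nat \<Rightarrow> nat list \<Rightarrow> nat \<Rightarrow> bool" where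
  "sf_extends d w a \<longleftrightarrow> a \<le> d \<and> (w \<noteq> [] \<longrightarrow> a \<noteq> w ! 0)
     \<and> (3 \<le> length w \<longrightarrow> \<not> (a = w ! 1 \<and> w ! 0 = w ! 2))"

definition starts_aba :: "nat list \<Rightarrow> bool" where
  "starts_aba w \<longleftrightarrow> 3 \<le> length w \<and> w ! 0 = w ! 2"

definition aba_words :: "nat \<Rightarrow> nat \<Rightarrow> nat list set" where
  "aba_words d m = {w \<in> sf_words d m. starts_aba w}"

lemma all_index_Suc_bound:
  "(\<forall>i. i + k < Suc n \<longrightarrow> P i) \<longleftrightarrow> (k < Suc n \<longrightarrow> P 0) \<and> (\<forall>i. i + k < n \<longrightarrow> P (Suc i))"
  (is "?lhs \<longleftrightarrow> ?rhs")
proof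
  show "?lhs \<Longrightarrow> ?rhs" by auto
  show "?rhs \<Longrightarrow> ?lhs" by (metis add_Suc not0_implies_Suc Suc_less_eq add_0)
qed

lemma ex_index_Suc_bound:
  "(\<exists>i. i + k < Suc n \<and> P i) \<longleftrightarrow> (k < Suc n \<and> P 0) \<or> (\<exists>i. i + k < n \<and> P (Suc i))"
  using all_index_Suc_bound[of k n "\<lambda>i. \<not> P i"] by blast

lemma adjacent_distinct_Cons:
  "(\<forall>i. i + 1 < length (a # w) \<longrightarrow> (a # w) ! i \<noteq> (a # w) ! (i + 1))
     \<longleftrightarrow> (w \<noteq> [] \<longrightarrow> a \<noteq> w ! 0) \<and> (\<forall>i. i + 1 < length w \<longrightarrow> w ! i \<noteq> w ! (i + 1))"
  unfolding length_Cons all_index_Suc_bound by simp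

lemma abab_factor_Cons:
  "(\<exists>i. i + 3 < length (a # w) \<and> (a # w) ! i = (a # w) ! (i + 2) \<and> (a # w) ! (i + 1) = (a # w) ! (i + 3))
     \<longleftrightarrow> (3 \<le> length w \<and> a = w ! 1 \<and> w ! 0 = w ! 2)
       \<or> (\<exists>i. i + 3 < length w \<and> w ! i = w ! (i + 2) \<and> w ! (i + 1) = w ! (i + 3))"
  unfolding length_Cons ex_index_Suc_bound by (simp add: numeral_eq_Suc Suc_le_eq)

lemma sf_word_Cons: "sf_word d (a # w) \<longleftrightarrow> sf_word d w \<and> sf_extends d w a"
  unfolding sf_word_def sf_extends_def adjacent_distinct_Cons abab_factor_Cons set_simps insert_subset
  by auto

lemma finite_sf_words: "finite (sf_words d m)"
proof (rule finite_subset)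
  show "sf_words d m \<subseteq> {w. set w \<subseteq> {0..d} \<and> length w = m}"
    by (auto simp: sf_words_def sf_word_def)
qed (rule finite_lists_length_eq, simp)

lemma finite_sf_extends: "finite {a. sf_extends d w a \<and> P a}"
  by (rule finite_subset[of _ "{0..d}"]) (auto simp: sf_extends_def)

lemma sf_words_Suc_filter:
  "{v \<in> sf_words d (Suc m). P v}
     = (\<lambda>(w, a). a # w) ` (SIGMA w:sf_words d m. {a. sf_extends d w a \<and> P (a # w)})"
proof (rule set_eqI)
  fix v show "v \<in> {v \<in> sf_words d (Suc m). P v}
    \<longleftrightarrow> v \<in> (\<lambda>(w, a). a # w) ` (SIGMA w:sf_words d m. {a. sf_extends d w a \<and> P (a # w)})"
    by (cases v) (auto simp: sf_words_def sf_word_Cons image_iff)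
qed

lemma card_sf_words_Suc_filter:
  "card {v \<in> sf_words d (Suc m). P v} = (\<Sum>w\<in>sf_words d m. card {a. sf_extends d w a \<and> P (a # w)})"
proof -
  have "inj_on (\<lambda>(w, a). a # w) X" for X :: "(nat list \<times> nat) set"
    by (auto simp: inj_on_def)
  then show ?thesis
    unfolding sf_words_Suc_filter
    by (simp add: card_image card_SigmaI finite_sf_words finite_sf_extends)
qed

lemma card_sf_extends:
  assumes "sf_word d w" and "w \<noteq> []"
  shows "int (card {a. sf_extends d w a}) = int d - (if starts_aba w then 1 else 0)"
proof -
  have letters: "set w \<subseteq> {0..d}" and distinct_01: "1 < length w \<Longrightarrow> w ! 0 \<noteq> w ! 1"
    using assms(1) unfolding sf_word_def by auto
  have w0: "w ! 0 \<in> {0..d}"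
    using letters assms(2) nth_mem by blast
  show ?thesis
  proof (cases "starts_aba w")
    case True
    then have "1 < length w" by (simp add: starts_aba_def)
    then have w1: "w ! 1 \<in> {0..d}" and "w ! 0 \<noteq> w ! 1"
      using letters distinct_01 nth_mem by blast+
    moreover have "{a. sf_extends d w a} = {0..d} - {w ! 0, w ! 1}"
      using True assms(2) by (auto simp: sf_extends_def starts_aba_def)
    ultimately show ?thesis
      using True w0 by (simp add: card_Diff_subset)
  next
    case False
    then have "{a. sf_extends d w a} = {0..d} - {w ! 0}"
      using assms(2) by (auto simp: sf_extends_def starts_aba_def)
    then show ?thesis
      using False w0 by (simp add: card_Diff_subset)
  qed
qed

lemma card_sf_extends_starts_aba:
  assumes "sf_word d w" and "2 \<le> length w"
  shows "card {a. sf_extends d w a \<and> starts_aba (a # w)} = (if starts_aba w then 0 else 1)"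
proof (cases "starts_aba w")
  case True
  then have "{a. sf_extends d w a \<and> starts_aba (a # w)} = {}"
    by (auto simp: sf_extends_def starts_aba_def)
  then show ?thesis
    using True by (simp only: card.empty if_True)
next
  case False
  have letters: "set w \<subseteq> {0..d}" and "w ! 0 \<noteq> w ! 1"
    using assms unfolding sf_word_def by auto
  moreover have "w ! 1 \<le> d"
    using subsetD[OF letters nth_mem[of 1 w]] assms(2) by simp
  ultimately have "{a. sf_extends d w a \<and> starts_aba (a # w)} = {w ! 1}"
    using False assms(2) by (auto simp: sf_extends_def starts_aba_def)
  then show ?thesis
    using False by simp
qed

lemma sum_starts_aba_indicator:
  "(\<Sum>w\<in>sf_words d m. if starts_aba w then 1 else 0 :: int) = int (card (aba_words d m))"
  using sum.inter_filter[OF finite_sf_words, of "\<lambda>_. 1::int" d m starts_aba]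
  by (simp add: aba_words_def)

lemma card_sf_words_Suc:
  assumes "1 \<le> m"
  shows "int (card (sf_words d (Suc m))) = int d * int (card (sf_words d m)) - int (card (aba_words d m))"
proof -
  have "int (card (sf_words d (Suc m))) = (\<Sum>w\<in>sf_words d m. int (card {a. sf_extends d w a}))"
    using card_sf_words_Suc_filter[of d m "\<lambda>_. True"] by simp
  also have "\<dots> = (\<Sum>w\<in>sf_words d m. int d - (if starts_aba w then 1 else 0))"
  proof (rule sum.cong)
    fix w
    assume "w \<in> sf_words d m"
    with assms show "int (card {a. sf_extends d w a}) = int d - (if starts_aba w then 1 else 0)"
      by (intro card_sf_extends) (auto simp: sf_words_def)
  qed simp
  finally show ?thesis
    by (simp add: sum_subtractf sum_starts_aba_indicator)
qed

lemma card_aba_words_Suc: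
  assumes "2 \<le> m"
  shows "int (card (aba_words d (Suc m))) = int (card (sf_words d m)) - int (card (aba_words d m))"
proof -
  have "int (card (aba_words d (Suc m)))
      = (\<Sum>w\<in>sf_words d m. int (card {a. sf_extends d w a \<and> starts_aba (a # w)}))"
    unfolding aba_words_def card_sf_words_Suc_filter by simp
  also have "\<dots> = (\<Sum>w\<in>sf_words d m. 1 - (if starts_aba w then 1 else 0))"
  proof (rule sum.cong)
    fix w
    assume "w \<in> sf_words d m"
    with assms show "int (card {a. sf_extends d w a \<and> starts_aba (a # w)}) = 1 - (if starts_aba w then 1 else 0)"
      using card_sf_extends_starts_aba[of d w] by (auto simp: sf_words_def)
  qed simp
  finally show ?thesis
    by (simp add: sum_subtractf sum_starts_aba_indicator)
qed

lemma card_sf_words_recurrence: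
  assumes "2 \<le> m"
  shows "int (card (sf_words d (m + 2)))
       = (int d - 1) * int (card (sf_words d (m + 1))) + (int d - 1) * int (card (sf_words d m))"
  using card_sf_words_Suc[of "Suc m" d] card_sf_words_Suc[of m d] card_aba_words_Suc[of m d] assms
  by (simp add: left_diff_distrib)

lemma sf_words_0: "sf_words d 0 = {[]}"
  by (auto simp: sf_words_def sf_word_def)

lemma card_sf_words_1: "card (sf_words d 1) = d + 1"
proof -
  have "{a. sf_extends d [] a} = {0..d}"
    by (auto simp: sf_extends_def)
  then show ?thesis
    using card_sf_words_Suc_filter[of d 0 "\<lambda>_. True"] by (simp add: sf_words_0)
qed

lemma aba_words_short: "m < 3 \<Longrightarrow> aba_words d m = {}"
  by (auto simp: aba_words_def sf_words_def starts_aba_def)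

theorem mainTheorem11:
  fixes d :: nat
  assumes "d \<ge> 2"
  shows "int (nSF d 0) = int d ^ 4 + int d ^ 3 - int d ^ 2 - int d
       \<and> int (nSF d 1) = int d ^ 5 + int d ^ 4 - 2 * int d ^ 3 - int d ^ 2 + int d
       \<and> (\<forall>k\<ge>2. int (nSF d k) = (int d - 1) * int (nSF d (k - 1)) + (int d - 1) * int (nSF d (k - 2)))"
proof -
  let ?s = "\<lambda>m. int (card (sf_words d m))"
  have s2: "?s 2 = int d * (int d + 1)"
    using card_sf_words_Suc[of 1 d] card_sf_words_1[of d] aba_words_short[of 1 d]
    by (simp add: numeral_2_eq_2)
  have s3: "?s 3 = int d * ?s 2"
    using card_sf_words_Suc[of 2 d] aba_words_short[of 2 d] by simp
  have t3: "int (card (aba_words d 3)) = ?s 2"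
    using card_aba_words_Suc[of 2 d] aba_words_short[of 2 d] by simp
  have s4: "?s 4 = int d * ?s 3 - ?s 2"
    using card_sf_words_Suc[of 3 d] t3 by simp
  have s5: "?s 5 = (int d - 1) * ?s 4 + (int d - 1) * ?s 3"
    using card_sf_words_recurrence[of 3 d] by simp
  have nSF_s: "int (nSF d k) = ?s (k + 4)" for k
    by (simp add: nSF_def)
  show ?thesis
  proof (intro conjI allI impI)
    show "int (nSF d 0) = int d ^ 4 + int d ^ 3 - int d ^ 2 - int d"
      unfolding nSF_s[of 0] by (simp add: s4 s3 s2) algebra
    show "int (nSF d 1) = int d ^ 5 + int d ^ 4 - 2 * int d ^ 3 - int d ^ 2 + int d"
      unfolding nSF_s[of 1] by (simp add: s5 s4 s3 s2) algebra
  next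
    fix k :: nat
    assume "k \<ge> 2"
    then obtain j where "k = 2 + j"
      using le_Suc_ex by blast
    then show "int (nSF d k) = (int d - 1) * int (nSF d (k - 1)) + (int d - 1) * int (nSF d (k - 2))"
      using card_sf_words_recurrence[of "j + 4" d] by (simp add: nSF_def)
  qed
qed

end
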